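(* Let $k,n\in\mathbb N$ and $U\subset\mathrm{Sym}_n$. Let $\mathcal O(U)$ be the set of orbits of $\langle U\rangle$ on $\{1,\dots,n\}$. Then the number of involutions $\pi\in\mathrm{Sym}_n$ such that - $\pi$ commutes with every element of $U$, and - the induced action of $\pi$ on $\mathcal O(U)$ has exactly $k$ orbits of size $2$ is at most $2^n\,|\mathrm{Inv}_{|\mathcal O(U)|,k}|$.
   Context: Involutions here include the identity, i.e. all $\pi$ with $\pi^2=1$. A permutation commuting with $\langle U\rangle$ permutes the $\langle U\rangle$-orbits. $\mathrm{Inv}_{N,k}$ is the set of $\sigma\in\mathrm{Sym}_N$ with $\sigma^2=1$ and exactly $N-2k$ fixed points, i.e. with exactly $k$ two-cycles. *)

theory Defs
  imports "HOL-Combinatorics.Combinatorics"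
begin

definition Sym :: "nat \<Rightarrow> (nat \<Rightarrow> nat) set" where
  "Sym n = {p. p permutes {1..n}}"

definition gen_orbit_rel :: "nat \<Rightarrow> (nat \<Rightarrow> nat) set \<Rightarrow> (nat \<times> nat) set" where
  "gen_orbit_rel n U =
     (let R = {(x, u x) | x u. x \<in> {1..n} \<and> u \<in> U} in (Id_on {1..n} \<union> R \<union> R\<inverse>)\<^sup>*)"

definition gen_orbits :: "nat \<Rightarrow> (nat \<Rightarrow> nat) set \<Rightarrow> nat set set" where
  "gen_orbits n U = {1..n} // gen_orbit_rel n U"

definition induced_orbits :: "(nat \<Rightarrow> nat) \<Rightarrow> nat set set \<Rightarrow> nat set set set" where
  "induced_orbits p \<O> = (\<lambda>C. {(((`) p) ^^ m) C | m. True}) ` \<O>"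

definition Inv :: "nat \<Rightarrow> nat \<Rightarrow> (nat \<Rightarrow> nat) set" where
  "Inv N k = {s. s \<in> Sym N \<and> s \<circ> s = id \<and> card {x \<in> {1..N}. s x = x} + 2 * k = N}"

end

theory Submission
  imports Defs
begin

(* An involution p commuting with U maps U-orbits to U-orbits, so it induces an involution on
   the orbit set O(U) whose 2-cycles are exactly the induced orbits of size 2; numbering the
   orbits turns it into an element of Inv_{|O(U)|,k}. Conversely, since p commutes with U, it
   is determined on an orbit C by its value at a single point of C, and that value lies in the
   orbit p(C), which has |C| elements. Hence a given involution of O(U) is induced by at most
   prod |C| <= 2^(sum |C|) = 2^n involutions p. *)

section \<open>Elementary counting\<close>

lemma finite_Sym: "finite (Sym n)"
  by (simp add: Sym_def finite_permutations)

lemma card_le_card_image_mult: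
  assumes "finite A" and "\<And>x. x \<in> A \<Longrightarrow> card {y \<in> A. f y = f x} \<le> b"
  shows "card A \<le> card (f ` A) * b"
proof -
  have "A = (\<Union>z\<in>f ` A. {y \<in> A. f y = z})"
    by blast
  then have "card A \<le> (\<Sum>z\<in>f ` A. card {y \<in> A. f y = z})"
    by (metis assms(1) card_UN_le finite_imageI)
  also have "\<dots> \<le> (\<Sum>z\<in>f ` A. b)"
    using assms(2) by (intro sum_mono) auto
  finally show ?thesis
    by simp
qed

lemma prod_card_partition_le:
  assumes "partition_on A P" and "finite A"
  shows "(\<Prod>X\<in>P. card X) \<le> 2 ^ card A"
proof -
  have finite_block: "X \<in> P \<Longrightarrow> finite X" for X
    using assms partition_onD1 by (metis Union_upper finite_subset)
  have "(\<Prod>X\<in>P. card X) \<le> (\<Prod>X\<in>P. 2 ^ card X)"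
    by (intro prod_mono) (simp add: less_imp_le less_exp)
  also have "\<dots> = 2 ^ (\<Sum>X\<in>P. card X)"
    by (simp add: power_sum)
  also have "\<dots> = 2 ^ card A"
    using product_partition[OF assms(1) finite_block] by simp
  finally show ?thesis .
qed

section \<open>Involutions of a finite set\<close>

definition involutions_on :: "'a set \<Rightarrow> nat \<Rightarrow> ('a \<Rightarrow> 'a) set" where
  "involutions_on A k =
     {\<sigma>. \<sigma> permutes A \<and> \<sigma> \<circ> \<sigma> = id \<and> card {x \<in> A. \<sigma> x = x} + 2 * k = card A}"

lemma finite_involutions_on: "finite A \<Longrightarrow> finite (involutions_on A k)"
  by (rule finite_subset[OF _ finite_permutations]) (auto simp: involutions_on_def)

lemma restrict_involution_permutes:
  assumes "\<And>x. x \<in> A \<Longrightarrow> f x \<in> A" and "\<And>x. x \<in> A \<Longrightarrow> f (f x) = x"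
  defines "\<sigma> \<equiv> \<lambda>x. if x \<in> A then f x else x"
  shows "\<sigma> permutes A" and "\<sigma> \<circ> \<sigma> = id"
proof -
  have "bij_betw \<sigma> A A"
    by (rule bij_betw_byWitness[where f' = \<sigma>]) (use assms in auto)
  then show "\<sigma> permutes A"
    by (rule bij_imp_permutes) (simp add: \<sigma>_def)
  show "\<sigma> \<circ> \<sigma> = id"
    using assms by (auto simp: fun_eq_iff)
qed

lemma card_fixpoints_add_two_cycles:
  assumes "finite A" and "\<And>x. x \<in> A \<Longrightarrow> f x \<in> A" and "\<And>x. x \<in> A \<Longrightarrow> f (f x) = x"
  shows "card {x \<in> A. f x = x} + 2 * card {D \<in> (\<lambda>x. {x, f x}) ` A. card D = 2} = card A"
proof -
  let ?N = "{x \<in> A. f x \<noteq> x}"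
  have two_cycles: "{D \<in> (\<lambda>x. {x, f x}) ` A. card D = 2} = (\<lambda>x. {x, f x}) ` ?N"
    by (auto simp: card_2_iff)
  have same_cycle: "{y, f y} = {x, f x}" if "x \<in> A" "y \<in> {x, f x}" for x y
    using that assms(3) by auto
  have "\<Union> ((\<lambda>x. {x, f x}) ` ?N) = ?N"
    using assms(2,3) by fastforce
  moreover have "pairwise disjnt ((\<lambda>x. {x, f x}) ` ?N)"
  proof (rule pairwise_imageI)
    fix x y
    assume "x \<in> ?N" "y \<in> ?N" "{x, f x} \<noteq> {y, f y}"
    then show "disjnt {x, f x} {y, f y}"
      using same_cycle by (metis (no_types, lifting) disjnt_iff mem_Collect_eq)
  qed
  ultimately have "card ?N = (\<Sum>D\<in>(\<lambda>x. {x, f x}) ` ?N. card D)"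
    using card_Union_disjoint by fastforce
  also have "\<dots> = (\<Sum>D\<in>(\<lambda>x. {x, f x}) ` ?N. 2)"
    by (intro sum.cong) auto
  also have "\<dots> = 2 * card {D \<in> (\<lambda>x. {x, f x}) ` A. card D = 2}"
    by (simp add: two_cycles)
  finally have "card ?N = 2 * card {D \<in> (\<lambda>x. {x, f x}) ` A. card D = 2}" .
  moreover have "card A = card {x \<in> A. f x = x} + card ?N"
    using assms(1) by (subst card_Un_disjoint[symmetric]) (auto intro: arg_cong[where f = card])
  ultimately show ?thesis
    by simp
qed

lemma card_involutions_on_le_card_Inv:
  assumes "finite A"
  shows "card (involutions_on A k) \<le> card (Inv (card A) k)"
proof -
  let ?I = "{1..card A}"
  obtain g where g: "bij_betw g A ?I"
    using finite_same_card_bij[OF assms, of ?I] by auto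
  define conj where "conj \<sigma> = (\<lambda>i. if i \<in> ?I then g (\<sigma> (inv_into A g i)) else i)" for \<sigma>
  have conj_g: "conj \<sigma> (g x) = g (\<sigma> x)" if "x \<in> A" for \<sigma> x
  proof -
    have "g x \<in> ?I"
      using g that by (rule bij_betw_apply)
    then show ?thesis
      using g that by (simp add: conj_def bij_betw_inv_into_left)
  qed
  have "conj \<sigma> \<in> Inv (card A) k" if "\<sigma> \<in> involutions_on A k" for \<sigma>
  proof -
    have \<sigma>: "\<sigma> permutes A" "\<sigma> \<circ> \<sigma> = id" "card {x \<in> A. \<sigma> x = x} + 2 * k = card A"
      using that by (auto simp: involutions_on_def)
    have "conj \<sigma> permutes ?I"
      using permutes_bij_inv_into[OF \<sigma>(1) g] by (simp add: conj_def)
    moreover have "conj \<sigma> \<circ> conj \<sigma> = id"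
    proof
      fix i
      show "(conj \<sigma> \<circ> conj \<sigma>) i = id i"
      proof (cases "i \<in> ?I")
        case True
        then obtain x where "x \<in> A" "i = g x"
          using bij_betw_imp_surj_on[OF g] by blast
        then show ?thesis
          using conj_g permutes_in_image[OF \<sigma>(1)] \<sigma>(2) by (simp add: pointfree_idE)
      next
        case False
        then have "conj \<sigma> i = i"
          unfolding conj_def by auto
        then show ?thesis
          by simp
      qed
    qed
    moreover have "card {i \<in> ?I. conj \<sigma> i = i} = card {x \<in> A. \<sigma> x = x}"
    proof -
      have "{i \<in> ?I. conj \<sigma> i = i} = {i \<in> g ` A. conj \<sigma> i = i}"
        using bij_betw_imp_surj_on[OF g] by simp
      also have "\<dots> = g ` {x \<in> A. conj \<sigma> (g x) = g x}"
        by blast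
      also have "{x \<in> A. conj \<sigma> (g x) = g x} = {x \<in> A. \<sigma> x = x}"
        using conj_g g permutes_in_image[OF \<sigma>(1)] by (auto simp: bij_betw_def inj_on_eq_iff)
      finally have "{i \<in> ?I. conj \<sigma> i = i} = g ` {x \<in> A. \<sigma> x = x}" .
      moreover have "inj_on g {x \<in> A. \<sigma> x = x}"
        using g by (auto simp: bij_betw_def intro: inj_on_subset)
      ultimately show ?thesis
        by (simp add: card_image)
    qed
    ultimately show ?thesis
      using \<sigma>(3) by (simp add: Inv_def Sym_def)
  qed
  moreover have "inj_on conj (involutions_on A k)"
  proof (rule inj_onI)
    fix \<sigma> \<tau>
    assume "\<sigma> \<in> involutions_on A k" "\<tau> \<in> involutions_on A k" and eq: "conj \<sigma> = conj \<tau>"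
    then have \<sigma>: "\<sigma> permutes A" and \<tau>: "\<tau> permutes A"
      by (simp_all add: involutions_on_def)
    show "\<sigma> = \<tau>"
    proof
      fix x
      show "\<sigma> x = \<tau> x"
      proof (cases "x \<in> A")
        case True
        then have "g (\<sigma> x) = g (\<tau> x)"
          using eq conj_g by metis
        moreover have "\<sigma> x \<in> A" "\<tau> x \<in> A"
          using True \<sigma> \<tau> by (simp_all add: permutes_in_image)
        ultimately show ?thesis
          using g by (auto simp: bij_betw_def inj_on_eq_iff)
      next
        case False
        then show ?thesis
          using \<sigma> \<tau> by (simp add: permutes_not_in)
      qed
    qed
  qed
  moreover have "finite (Inv (card A) k)"
    using finite_Sym by (rule rev_finite_subset) (auto simp: Inv_def)
  ultimately show ?thesis
    by (intro card_inj_on_le) auto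
qed

section \<open>Orbits of the group generated by U\<close>

lemma gen_orbit_rel_refl: "(x, x) \<in> gen_orbit_rel n U"
  by (simp add: gen_orbit_rel_def Let_def)

lemma gen_orbit_rel_step: "x \<in> {1..n} \<Longrightarrow> u \<in> U \<Longrightarrow> (x, u x) \<in> gen_orbit_rel n U"
  unfolding gen_orbit_rel_def Let_def by blast

lemma sym_gen_orbit_rel: "sym (gen_orbit_rel n U)"
  unfolding gen_orbit_rel_def Let_def by (intro sym_rtrancl) (auto simp: sym_def)

lemma trans_gen_orbit_rel: "trans (gen_orbit_rel n U)"
  unfolding gen_orbit_rel_def Let_def by (rule trans_rtrancl)

lemma gen_orbit_rel_induct [consumes 1, case_names base forward backward]:
  assumes "(a, b) \<in> gen_orbit_rel n U" and "P a"
    and "\<And>x u. x \<in> {1..n} \<Longrightarrow> u \<in> U \<Longrightarrow> P x \<Longrightarrow> P (u x)"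
    and "\<And>x u. x \<in> {1..n} \<Longrightarrow> u \<in> U \<Longrightarrow> P (u x) \<Longrightarrow> P x"
  shows "P b"
  using assms(1,2) unfolding gen_orbit_rel_def Let_def
  by (induction rule: rtrancl_induct) (use assms(3,4) in blast)+

lemma gen_orbit_rel_closed:
  assumes "U \<subseteq> Sym n" and "(a, b) \<in> gen_orbit_rel n U" and "a \<in> {1..n}"
  shows "b \<in> {1..n}"
  using assms(2,3)
proof (induction rule: gen_orbit_rel_induct)
  case (forward x u)
  then show ?case
    using assms(1) permutes_in_image[of u "{1..n}" x] by (auto simp: Sym_def)
qed

lemma gen_orbit_rel_equivariant:
  assumes p: "p permutes {1..n}" and comm: "\<forall>u\<in>U. p \<circ> u = u \<circ> p"
    and "(a, b) \<in> gen_orbit_rel n U"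
  shows "(p a, p b) \<in> gen_orbit_rel n U"
proof -
  have step: "(p x, p (u x)) \<in> gen_orbit_rel n U" if "x \<in> {1..n}" "u \<in> U" for x u
    using gen_orbit_rel_step[of "p x" n u U] that comm p by (metis comp_apply permutes_in_image)
  from assms(3) show ?thesis
  proof (induction rule: gen_orbit_rel_induct)
    case base
    show ?case
      by (rule gen_orbit_rel_refl)
  next
    case (forward x u)
    then show ?case
      using step trans_gen_orbit_rel by (meson transD)
  next
    case (backward x u)
    then show ?case
      using step sym_gen_orbit_rel trans_gen_orbit_rel by (meson symD transD)
  qed
qed

lemma commuting_eq_along_gen_orbit_rel:
  assumes U: "U \<subseteq> Sym n"
    and comm: "\<forall>u\<in>U. p \<circ> u = u \<circ> p" "\<forall>u\<in>U. q \<circ> u = u \<circ> q"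
    and "(a, b) \<in> gen_orbit_rel n U" and "p a = q a"
  shows "p b = q b"
  using assms(4,5)
proof (induction rule: gen_orbit_rel_induct)
  case (forward x u)
  then show ?case
    using comm by (metis comp_apply)
next
  case (backward x u)
  then have "u (p x) = u (q x)"
    using comm by (metis comp_apply)
  moreover have "inj u"
    using U backward(2) by (auto simp: Sym_def permutes_inj)
  ultimately show ?case
    by (simp add: inj_eq)
qed

lemma gen_orbit_rel_Image_eq:
  "(x, y) \<in> gen_orbit_rel n U \<Longrightarrow> gen_orbit_rel n U `` {x} = gen_orbit_rel n U `` {y}"
  using sym_gen_orbit_rel trans_gen_orbit_rel by (blast dest: symD transD)

lemma gen_orbits_eq: "gen_orbits n U = (\<lambda>x. gen_orbit_rel n U `` {x}) ` {1..n}"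
  by (auto simp: gen_orbits_def quotient_def)

lemma finite_gen_orbits: "finite (gen_orbits n U)"
  by (simp add: gen_orbits_eq)

lemma gen_orbit_eq_of_mem:
  assumes "C \<in> gen_orbits n U" and "x \<in> C"
  shows "C = gen_orbit_rel n U `` {x}"
proof -
  obtain y where "C = gen_orbit_rel n U `` {y}"
    using assms(1) by (auto simp: gen_orbits_eq)
  then show ?thesis
    using assms(2) gen_orbit_rel_Image_eq by blast
qed

lemma partition_on_gen_orbits:
  assumes "U \<subseteq> Sym n"
  shows "partition_on {1..n} (gen_orbits n U)"
proof (rule partition_onI)
  show "\<Union> (gen_orbits n U) = {1..n}"
    using gen_orbit_rel_closed[OF assms] gen_orbit_rel_refl by (fastforce simp: gen_orbits_eq)
  show "{} \<notin> gen_orbits n U"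
    using gen_orbit_rel_refl by (fastforce simp: gen_orbits_eq)
  show "disjnt C D" if "C \<in> gen_orbits n U" "D \<in> gen_orbits n U" "C \<noteq> D" for C D
    using that gen_orbit_eq_of_mem by (metis disjnt_iff)
qed

lemma gen_orbit_subset: "U \<subseteq> Sym n \<Longrightarrow> C \<in> gen_orbits n U \<Longrightarrow> C \<subseteq> {1..n}"
  using partition_onD1[OF partition_on_gen_orbits] by blast

lemma image_gen_orbit:
  assumes p: "p permutes {1..n}" and comm: "\<forall>u\<in>U. p \<circ> u = u \<circ> p" and pp: "p \<circ> p = id"
  shows "p ` (gen_orbit_rel n U `` {x}) = gen_orbit_rel n U `` {p x}"
proof
  show "p ` (gen_orbit_rel n U `` {x}) \<subseteq> gen_orbit_rel n U `` {p x}"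
    using gen_orbit_rel_equivariant[OF p comm] by blast
  have p_p: "p (p z) = z" for z
    using pp by (simp add: pointfree_idE)
  show "gen_orbit_rel n U `` {p x} \<subseteq> p ` (gen_orbit_rel n U `` {x})"
  proof
    fix y
    assume "y \<in> gen_orbit_rel n U `` {p x}"
    then have "p y \<in> gen_orbit_rel n U `` {x}"
      using gen_orbit_rel_equivariant[OF p comm, of "p x" y] by (simp add: p_p)
    then show "y \<in> p ` (gen_orbit_rel n U `` {x})"
      by (metis image_eqI p_p)
  qed
qed

lemma image_gen_orbits:
  assumes "p permutes {1..n}" and "\<forall>u\<in>U. p \<circ> u = u \<circ> p" and "p \<circ> p = id"
    and "C \<in> gen_orbits n U"
  shows "p ` C \<in> gen_orbits n U"
proof -
  obtain x where "x \<in> {1..n}" "C = gen_orbit_rel n U `` {x}"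
    using assms(4) by (auto simp: gen_orbits_eq)
  then show ?thesis
    using image_gen_orbit[OF assms(1-3)] permutes_in_image[OF assms(1)] by (simp add: gen_orbits_eq)
qed

section \<open>The action induced on the orbits\<close>

definition orbit_action :: "nat \<Rightarrow> (nat \<Rightarrow> nat) set \<Rightarrow> (nat \<Rightarrow> nat) \<Rightarrow> nat set \<Rightarrow> nat set" where
  "orbit_action n U p = (\<lambda>C. if C \<in> gen_orbits n U then p ` C else C)"

lemma funpow_image_involution:
  assumes "p \<circ> p = id"
  shows "((`) p ^^ j) C = (if even j then C else p ` C)"
  using assms by (induction j) (auto simp: image_comp)

lemma induced_orbits_involution:
  assumes "p \<circ> p = id"
  shows "induced_orbits p \<O> = (\<lambda>C. {C, p ` C}) ` \<O>"
proof -
  have "{((`) p ^^ j) C | j. True} = {C, p ` C}" for C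
    using funpow_image_involution[OF assms] by (auto intro: exI[of _ 0] exI[of _ 1])
  then show ?thesis
    by (simp add: induced_orbits_def)
qed

lemma orbit_action_in_involutions_on:
  assumes p: "p permutes {1..n}" "\<forall>u\<in>U. p \<circ> u = u \<circ> p" "p \<circ> p = id"
  shows "orbit_action n U p
           \<in> involutions_on (gen_orbits n U) (card {D \<in> induced_orbits p (gen_orbits n U). card D = 2})"
proof -
  let ?O = "gen_orbits n U"
  have maps: "p ` C \<in> ?O" if "C \<in> ?O" for C
    using image_gen_orbits[OF p that] .
  have inv: "p ` p ` C = C" for C
    using p(3) by (simp add: image_comp)
  have action_maps: "orbit_action n U p C \<in> ?O"
    and action_inv: "orbit_action n U p (orbit_action n U p C) = C" if "C \<in> ?O" for C
    using maps inv that by (simp_all add: orbit_action_def)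
  have "induced_orbits p ?O = (\<lambda>C. {C, orbit_action n U p C}) ` ?O"
    unfolding induced_orbits_involution[OF p(3)] orbit_action_def by (rule image_cong) auto
  then have "card {C \<in> ?O. orbit_action n U p C = C}
             + 2 * card {D \<in> induced_orbits p ?O. card D = 2} = card ?O"
    using card_fixpoints_add_two_cycles[OF finite_gen_orbits action_maps action_inv] by simp
  moreover have "orbit_action n U p permutes ?O" "orbit_action n U p \<circ> orbit_action n U p = id"
    using restrict_involution_permutes[of ?O "(`) p", OF maps inv] by (simp_all add: orbit_action_def)
  ultimately show ?thesis
    by (simp add: involutions_on_def)
qed

lemma card_commuting_perms_with_orbit_action_le:
  assumes U: "U \<subseteq> Sym n" and p0: "p0 permutes {1..n}"
  shows "card {p \<in> Sym n. (\<forall>u\<in>U. p \<circ> u = u \<circ> p) \<and> orbit_action n U p = orbit_action n U p0}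
         \<le> 2 ^ n"
    (is "card ?F \<le> _")
proof -
  let ?O = "gen_orbits n U"
  define rep where "rep p = restrict (\<lambda>C. p (Min C)) ?O" for p :: "nat \<Rightarrow> nat"
  have finite_orbit: "finite C" if "C \<in> ?O" for C
    using gen_orbit_subset[OF U that] by (rule finite_subset) simp
  have Min_orbit: "Min C \<in> C" if "C \<in> ?O" for C
  proof (rule Min_in)
    show "finite C"
      using finite_orbit[OF that] .
    show "C \<noteq> {}"
      using that partition_onD3[OF partition_on_gen_orbits[OF U]] by blast
  qed
  have "inj_on rep ?F"
  proof (rule inj_onI)
    fix p q
    assume p: "p \<in> ?F" and q: "q \<in> ?F" and rep: "rep p = rep q"
    show "p = q"
    proof
      fix y
      show "p y = q y"
      proof (cases "y \<in> {1..n}")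
        case True
        let ?C = "gen_orbit_rel n U `` {y}"
        have C: "?C \<in> ?O"
          using True by (simp add: gen_orbits_eq)
        then have "p (Min ?C) = q (Min ?C)"
          using fun_cong[OF rep, of ?C] by (simp add: rep_def)
        moreover have "(Min ?C, y) \<in> gen_orbit_rel n U"
          using Min_orbit[OF C] sym_gen_orbit_rel by (blast dest: symD)
        moreover have "\<forall>u\<in>U. p \<circ> u = u \<circ> p" "\<forall>u\<in>U. q \<circ> u = u \<circ> q"
          using p q by simp_all
        ultimately show ?thesis
          using commuting_eq_along_gen_orbit_rel[OF U] by blast
      next
        case False
        have "p permutes {1..n}" "q permutes {1..n}"
          using p q by (simp_all add: Sym_def)
        then show ?thesis
          using False by (simp add: permutes_not_in)
      qed
    qed
  qed
  moreover have "rep ` ?F \<subseteq> (\<Pi>\<^sub>E C\<in>?O. p0 ` C)"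
  proof
    fix r
    assume "r \<in> rep ` ?F"
    then obtain p where p: "p \<in> ?F" and "r = rep p"
      by blast
    from p have action: "orbit_action n U p = orbit_action n U p0"
      by simp
    have "p ` C = p0 ` C" if "C \<in> ?O" for C
      using fun_cong[OF action, of C] that by (simp add: orbit_action_def)
    then show "r \<in> (\<Pi>\<^sub>E C\<in>?O. p0 ` C)"
      using \<open>r = rep p\<close> Min_orbit by (fastforce simp: rep_def)
  qed
  moreover have "finite (\<Pi>\<^sub>E C\<in>?O. p0 ` C)"
    using finite_orbit by (simp add: finite_PiE finite_gen_orbits)
  ultimately have "card ?F \<le> card (\<Pi>\<^sub>E C\<in>?O. p0 ` C)"
    by (rule card_inj_on_le)
  also have "\<dots> = (\<Prod>C\<in>?O. card C)"
    using permutes_inj[OF p0] by (simp add: card_PiE finite_gen_orbits card_image inj_on_subset)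
  also have "\<dots> \<le> 2 ^ n"
    using prod_card_partition_le[OF partition_on_gen_orbits[OF U]] by simp
  finally show ?thesis .
qed

theorem lemma3p1:
  fixes k n :: nat and U :: "(nat \<Rightarrow> nat) set"
  assumes "U \<subseteq> Sym n"
  shows "card {p. p \<in> Sym n \<and> p \<circ> p = id \<and> (\<forall>u\<in>U. p \<circ> u = u \<circ> p) \<and>
                  card {D \<in> induced_orbits p (gen_orbits n U). card D = 2} = k}
         \<le> 2 ^ n * card (Inv (card (gen_orbits n U)) k)"
proof -
  let ?P = "{p. p \<in> Sym n \<and> p \<circ> p = id \<and> (\<forall>u\<in>U. p \<circ> u = u \<circ> p) \<and>
                  card {D \<in> induced_orbits p (gen_orbits n U). card D = 2} = k}"
  let ?act = "orbit_action n U"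
  have "finite ?P"
    by (rule finite_subset[OF _ finite_Sym]) blast
  moreover have "card {q \<in> ?P. ?act q = ?act p} \<le> 2 ^ n" if "p \<in> ?P" for p
  proof (rule order_trans[OF card_mono])
    show "finite {q \<in> Sym n. (\<forall>u\<in>U. q \<circ> u = u \<circ> q) \<and> ?act q = ?act p}" (is "finite ?F")
      by (simp add: finite_Sym)
    show "{q \<in> ?P. ?act q = ?act p} \<subseteq> ?F"
      by blast
    show "card ?F \<le> 2 ^ n"
      using card_commuting_perms_with_orbit_action_le[OF assms] that by (simp add: Sym_def)
  qed
  ultimately have "card ?P \<le> card (?act ` ?P) * 2 ^ n"
    by (rule card_le_card_image_mult)
  also have "card (?act ` ?P) \<le> card (involutions_on (gen_orbits n U) k)"
    using orbit_action_in_involutions_on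
    by (intro card_mono finite_involutions_on finite_gen_orbits) (auto simp: Sym_def)
  also have "\<dots> \<le> card (Inv (card (gen_orbits n U)) k)"
    by (rule card_involutions_on_le_card_Inv[OF finite_gen_orbits])
  finally show ?thesis
    by (simp add: mult.commute)
qed

end
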